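(* Suppose the total preorder $\succeq$ on $\mathcal{Q}_b$ is monotonic, continuous in the $\mathcal{L}_1$-topology, and satisfies the dual independence axiom. Then there exists a bounded, nondecreasing, continuous function $w:[0,1]\to\mathbb{R}$ such that $$U(\Phi)=\int_0^1\Phi(p)\,dw(p)$$ (a Stieltjes integral) is a numerical representation of $\succeq$ on $\mathcal{Q}_b$.
   Context: $\mathcal{Q}_b$ is the set of bounded, nondecreasing, left-continuous functions on $(0,1]$. The $\mathcal{L}_1$-topology on $\mathcal{Q}_b$ is given by the distance $\mathrm{dist}(\Phi,\Psi)=\int_0^1|\Phi(p)-\Psi(p)|\,dp$. A total preorder is reflexive, transitive, complete; $\succ$ its strict part; continuity means that for each $\Phi$ the sets $\{\Psi:\Psi\succeq\Phi\}$ and $\{\Psi:\Phi\succeq\Psi\}$ are closed. Monotonic: $\Phi\ge\Psi$ pointwise implies $\Phi\succeq\Psi$. Dual independence axiom: $\Phi\succ\Psi$ implies $\alpha\Phi+(1-\alpha)\Upsilon\succ\alpha\Psi+(1-\alpha)\Upsilon$ for all $\Upsilon\in\mathcal{Q}_b$, $\alpha\in(0,1)$. Numerical representation: $\Phi\succ\Psi\iff U(\Phi)>U(\Psi)$. *)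

theory Defs
  imports "HOL-Analysis.Analysis"
begin

text \<open>Q_b: bounded, nondecreasing, left-continuous functions on (0,1].
  Represented as functions real => real that vanish outside (0,1] (canonical extension).\<close>
definition Qb :: "(real \<Rightarrow> real) set" where
  "Qb = {\<Phi>. bounded (\<Phi> ` {0<..1}) \<and> mono_on {0<..1} \<Phi>
          \<and> (\<forall>p\<in>{0<..1}. (\<Phi> \<longlongrightarrow> \<Phi> p) (at_left p))
          \<and> (\<forall>p. p \<notin> {0<..1} \<longrightarrow> \<Phi> p = 0)}"

definition L1dist :: "(real \<Rightarrow> real) \<Rightarrow> (real \<Rightarrow> real) \<Rightarrow> real" where
  "L1dist \<Phi> \<Psi> = integral {0..1} (\<lambda>p. \<bar>\<Phi> p - \<Psi> p\<bar>)"

definition L1top :: "(real \<Rightarrow> real) topology" where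
  "L1top = Metric_space.mtopology Qb L1dist"

definition total_preorder_on :: "'a set \<Rightarrow> ('a \<Rightarrow> 'a \<Rightarrow> bool) \<Rightarrow> bool" where
  "total_preorder_on A R \<longleftrightarrow>
     (\<forall>x\<in>A. R x x) \<and>
     (\<forall>x\<in>A. \<forall>y\<in>A. \<forall>z\<in>A. R x y \<longrightarrow> R y z \<longrightarrow> R x z) \<and>
     (\<forall>x\<in>A. \<forall>y\<in>A. R x y \<or> R y x)"

definition strict_part :: "('a \<Rightarrow> 'a \<Rightarrow> bool) \<Rightarrow> 'a \<Rightarrow> 'a \<Rightarrow> bool" where
  "strict_part R x y \<longleftrightarrow> R x y \<and> \<not> R y x"

definition continuous_preorder :: "(real \<Rightarrow> real) topology \<Rightarrow> ((real \<Rightarrow> real) \<Rightarrow> (real \<Rightarrow> real) \<Rightarrow> bool) \<Rightarrow> bool" where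
  "continuous_preorder T R \<longleftrightarrow>
     (\<forall>\<Phi>\<in>topspace T. closedin T {\<Psi>\<in>topspace T. R \<Psi> \<Phi>} \<and> closedin T {\<Psi>\<in>topspace T. R \<Phi> \<Psi>})"

definition monotonic_pref :: "((real \<Rightarrow> real) \<Rightarrow> (real \<Rightarrow> real) \<Rightarrow> bool) \<Rightarrow> bool" where
  "monotonic_pref R \<longleftrightarrow>
     (\<forall>\<Phi>\<in>Qb. \<forall>\<Psi>\<in>Qb. (\<forall>p\<in>{0<..1}. \<Phi> p \<ge> \<Psi> p) \<longrightarrow> R \<Phi> \<Psi>)"

definition dual_independence :: "((real \<Rightarrow> real) \<Rightarrow> (real \<Rightarrow> real) \<Rightarrow> bool) \<Rightarrow> bool" where
  "dual_independence R \<longleftrightarrow>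
     (\<forall>\<Phi>\<in>Qb. \<forall>\<Psi>\<in>Qb. \<forall>\<Upsilon>\<in>Qb. \<forall>\<alpha>::real. 0 < \<alpha> \<and> \<alpha> < 1 \<longrightarrow> strict_part R \<Phi> \<Psi> \<longrightarrow>
        strict_part R (\<lambda>p. \<alpha> * \<Phi> p + (1 - \<alpha>) * \<Upsilon> p) (\<lambda>p. \<alpha> * \<Psi> p + (1 - \<alpha>) * \<Upsilon> p))"

text \<open>Lebesgue--Stieltjes integral over [0,1] with respect to w (w extended constantly outside [0,1]).\<close>
definition stieltjes01 :: "(real \<Rightarrow> real) \<Rightarrow> (real \<Rightarrow> real) \<Rightarrow> real" where
  "stieltjes01 w \<Phi> = (LINT p:{0..1}|interval_measure (\<lambda>x. w (max 0 (min 1 x))). \<Phi> p)"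

definition numerical_representation ::
  "'a set \<Rightarrow> ('a \<Rightarrow> 'a \<Rightarrow> bool) \<Rightarrow> ('a \<Rightarrow> real) \<Rightarrow> bool" where
  "numerical_representation A R U \<longleftrightarrow> (\<forall>x\<in>A. \<forall>y\<in>A. strict_part R x y \<longleftrightarrow> U x > U y)"

end

theory Submission
  imports Defs
begin

(* Write c for the constant function with value c on (0,1] and 1_(a,1] for the
   indicator step of (a,1].  Continuity, monotonicity and completeness give every \<Phi> in Q_b a
   certainty equivalent ce \<Phi>, a constant indifferent to \<Phi> (the two closed contour sets of \<Phi> in
   the constants cover the connected real line).  If some constant is strictly preferred to another,
   dual independence makes the order on constants strict, so ce is unique, represents the
   preference, and is affine under mixtures, hence additive and positively homogeneous; continuity
   makes ce L1-continuous.  The weight is w a = 1 - ce 1_(a,1]: nondecreasing, continuous,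
   0 on (-\<infinity>,0] and 1 on [1,\<infinity>).  For the Lebesgue-Stieltjes measure of w, ce and the integral
   agree on nonnegative combinations of steps plus a constant; every \<Phi> in Q_b is, by left
   continuity, the pointwise and L1 limit of bounded such "staircases", so dominated convergence
   gives ce = integral on all of Q_b.  If all constants are indifferent, so is everything, and w = 0. *)


definition const_fn :: "real \<Rightarrow> real \<Rightarrow> real" where
  "const_fn c = (\<lambda>p. if p \<in> {0<..1} then c else 0)"

definition step_fn :: "real \<Rightarrow> real \<Rightarrow> real" where
  "step_fn a = (\<lambda>p. if p \<in> {0<..1} \<and> a < p then 1 else 0)"

definition mix :: "real \<Rightarrow> (real \<Rightarrow> real) \<Rightarrow> (real \<Rightarrow> real) \<Rightarrow> real \<Rightarrow> real" where
  "mix \<alpha> f g = (\<lambda>p. \<alpha> * f p + (1 - \<alpha>) * g p)"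

lemma QbI:
  assumes "\<And>p. p \<in> {0<..1} \<Longrightarrow> \<bar>f p\<bar> \<le> B"
    and "\<And>x y. x \<in> {0<..1} \<Longrightarrow> y \<in> {0<..1} \<Longrightarrow> x \<le> y \<Longrightarrow> f x \<le> f y"
    and "\<And>p. p \<in> {0<..1} \<Longrightarrow> (f \<longlongrightarrow> f p) (at_left p)"
    and "\<And>p. p \<notin> {0<..1} \<Longrightarrow> f p = 0"
  shows "f \<in> Qb"
proof -
  have "bounded (f ` {0<..1})" unfolding bounded_iff using assms(1) by (intro exI[of _ B]) auto
  then show ?thesis unfolding Qb_def using assms by (auto simp: mono_on_def)
qed

(* The bound in QbD(1) is global and nonnegative since members of Q_b vanish outside (0,1]. *)
lemma QbD:
  assumes "f \<in> Qb"
  shows "\<exists>B\<ge>0. \<forall>p. \<bar>f p\<bar> \<le> B"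
    and "\<And>x y. x \<in> {0<..1} \<Longrightarrow> y \<in> {0<..1} \<Longrightarrow> x \<le> y \<Longrightarrow> f x \<le> f y"
    and "\<And>p. p \<in> {0<..1} \<Longrightarrow> (f \<longlongrightarrow> f p) (at_left p)"
    and "\<And>p. p \<notin> {0<..1} \<Longrightarrow> f p = 0"
proof -
  from assms obtain B where B: "\<forall>p\<in>{0<..1}. \<bar>f p\<bar> \<le> B"
    unfolding Qb_def bounded_iff by auto
  have "\<bar>f p\<bar> \<le> max B 0" for p
    using B assms unfolding Qb_def by (cases "p \<in> {0<..1}") (fastforce, auto)
  then show "\<exists>B\<ge>0. \<forall>p. \<bar>f p\<bar> \<le> B" by (intro exI[of _ "max B 0"]) auto
qed (use assms in \<open>auto simp: Qb_def mono_on_def\<close>)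

lemma const_fn_Qb: "const_fn c \<in> Qb"
  by (rule QbI[where B="\<bar>c\<bar>"])
    (auto simp: const_fn_def intro!: tendsto_eventually eventually_at_leftI[where a=0])

lemma step_fn_Qb: "step_fn a \<in> Qb"
proof (rule QbI[where B=1])
  fix p :: real assume p: "p \<in> {0<..1}"
  have "eventually (\<lambda>x. step_fn a x = step_fn a p) (at_left p)"
    using p by (intro eventually_at_leftI[where a="if a < p then max a 0 else 0"])
      (auto simp: step_fn_def split: if_splits)
  then show "(step_fn a \<longlongrightarrow> step_fn a p) (at_left p)" by (rule tendsto_eventually)
qed (auto simp: step_fn_def)

lemma add_Qb:
  assumes f: "f \<in> Qb" and g: "g \<in> Qb"
  shows "(\<lambda>p. f p + g p) \<in> Qb"
proof -
  obtain B1 where B1: "\<forall>p. \<bar>f p\<bar> \<le> B1" using QbD(1)[OF f] by blast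
  obtain B2 where B2: "\<forall>p. \<bar>g p\<bar> \<le> B2" using QbD(1)[OF g] by blast
  show ?thesis
  proof (rule QbI[where B="B1 + B2"])
    fix p :: real show "\<bar>f p + g p\<bar> \<le> B1 + B2"
      using B1 B2 abs_triangle_ineq[of "f p" "g p"] by (smt (verit))
  next
    fix x y :: real assume "x \<in> {0<..1}" "y \<in> {0<..1}" "x \<le> y"
    then show "f x + g x \<le> f y + g y" using QbD(2)[OF f] QbD(2)[OF g] by (meson add_mono)
  next
    fix p :: real assume "p \<in> {0<..1}"
    then show "((\<lambda>p. f p + g p) \<longlongrightarrow> f p + g p) (at_left p)"
      using QbD(3)[OF f] QbD(3)[OF g] by (intro tendsto_add) auto
  qed (use QbD(4)[OF f] QbD(4)[OF g] in auto)
qed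

lemma scale_Qb:
  assumes f: "f \<in> Qb" and t: "t \<ge> 0"
  shows "(\<lambda>p. t * f p) \<in> Qb"
proof -
  obtain B where B: "\<forall>p. \<bar>f p\<bar> \<le> B" using QbD(1)[OF f] by blast
  show ?thesis
  proof (rule QbI[where B="t * B"])
    fix p :: real show "\<bar>t * f p\<bar> \<le> t * B" using B t by (simp add: abs_mult mult_left_mono)
  next
    fix x y :: real assume "x \<in> {0<..1}" "y \<in> {0<..1}" "x \<le> y"
    then show "t * f x \<le> t * f y" using QbD(2)[OF f] t by (simp add: mult_left_mono)
  next
    fix p :: real assume "p \<in> {0<..1}"
    then show "((\<lambda>p. t * f p) \<longlongrightarrow> t * f p) (at_left p)"
      using QbD(3)[OF f] by (intro tendsto_mult) auto
  qed (use QbD(4)[OF f] in auto)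
qed

lemma mix_Qb: "f \<in> Qb \<Longrightarrow> g \<in> Qb \<Longrightarrow> 0 \<le> \<alpha> \<Longrightarrow> \<alpha> \<le> 1 \<Longrightarrow> mix \<alpha> f g \<in> Qb"
  unfolding mix_def by (intro add_Qb scale_Qb) auto

lemma zero_eq_const_fn: "(\<lambda>p. 0 :: real) = const_fn 0"
  by (auto simp: const_fn_def)

lemma sum_Qb: "finite K \<Longrightarrow> (\<And>k. k \<in> K \<Longrightarrow> f k \<in> Qb) \<Longrightarrow> (\<lambda>p. \<Sum>k\<in>K. f k p) \<in> Qb"
  by (induction K rule: finite_induct) (simp_all add: add_Qb zero_eq_const_fn const_fn_Qb)

lemma mix_const_fn: "mix \<alpha> (const_fn x) (const_fn y) = const_fn (\<alpha> * x + (1 - \<alpha>) * y)"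
  by (auto simp: mix_def const_fn_def)

(* Piecewise monotone, hence Borel measurable. *)
lemma Qb_borel_measurable: "f \<in> Qb \<Longrightarrow> f \<in> borel_measurable borel"
  by (rule borel_measurable_piecewise_mono[of "{{0<..1}, {..0}, {1<..}}"])
    (auto simp: mono_on_def QbD(4) dest: QbD(2))


(* The L1 distance is a metric on Q_b.  It is the Lebesgue integral of |f - g| over [0,1], which
   gives monotonicity and the triangle inequality; definiteness uses left continuity. *)

lemma Qb_abs_diff_integrable:
  assumes f: "f \<in> Qb" and g: "g \<in> Qb"
  shows "set_integrable lborel {0..1} (\<lambda>p. \<bar>f p - g p\<bar>)"
proof -
  obtain B1 where B1: "\<forall>p. \<bar>f p\<bar> \<le> B1" using QbD(1)[OF f] by blast
  obtain B2 where B2: "\<forall>p. \<bar>g p\<bar> \<le> B2" using QbD(1)[OF g] by blast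
  have "(\<lambda>p. \<bar>f p - g p\<bar>) \<in> borel_measurable lborel"
    using Qb_borel_measurable[OF f] Qb_borel_measurable[OF g] by measurable
  moreover have "norm \<bar>f x - g x\<bar> \<le> B1 + B2" for x
    using B1 B2 abs_triangle_ineq4[of "f x" "g x"] by (smt (verit) real_norm_def abs_abs)
  ultimately show ?thesis unfolding set_integrable_def
    by (intro integrableI_bounded_set_indicator[where B="B1 + B2"]) (auto simp: emeasure_lborel_Icc)
qed

lemma L1dist_lebesgue:
  assumes f: "f \<in> Qb" and g: "g \<in> Qb"
  shows "L1dist f g = (LINT p:{0..1}|lborel. \<bar>f p - g p\<bar>)"
  unfolding L1dist_def
  by (rule set_borel_integral_eq_integral(2)[OF Qb_abs_diff_integrable[OF f g], symmetric])

lemma L1dist_le: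
  assumes f: "f \<in> Qb" and g: "g \<in> Qb" and h: "set_integrable lborel {0..1} h"
    and le: "\<And>p. p \<in> {0..1} \<Longrightarrow> \<bar>f p - g p\<bar> \<le> h p"
  shows "L1dist f g \<le> (LINT p:{0..1}|lborel. h p)"
  unfolding L1dist_lebesgue[OF f g]
  by (rule set_integral_mono[OF Qb_abs_diff_integrable[OF f g] h le])

lemma L1dist_le_const:
  assumes f: "f \<in> Qb" and g: "g \<in> Qb" and le: "\<And>p. p \<in> {0..1} \<Longrightarrow> \<bar>f p - g p\<bar> \<le> k"
  shows "L1dist f g \<le> k"
proof -
  have "set_integrable lborel {0..1} (\<lambda>p::real. k)"
    unfolding set_integrable_def
    by (rule integrableI_bounded_set_indicator[where B="\<bar>k\<bar>"]) (auto simp: emeasure_lborel_Icc)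
  from L1dist_le[OF f g this le] show ?thesis
    by (simp add: set_lebesgue_integral_def measure_lborel_Icc)
qed

lemma L1dist_nonneg: "L1dist f g \<ge> 0"
  unfolding L1dist_def
  by (cases "(\<lambda>p. \<bar>f p - g p\<bar>) integrable_on {0..1}")
    (auto intro: integral_nonneg simp: not_integrable_integral)

lemma L1dist_commute: "L1dist f g = L1dist g f"
  unfolding L1dist_def by (simp add: abs_minus_commute)

lemma L1dist_triangle:
  assumes f: "f \<in> Qb" and g: "g \<in> Qb" and h: "h \<in> Qb"
  shows "L1dist f h \<le> L1dist f g + L1dist g h"
proof -
  note fg = Qb_abs_diff_integrable[OF f g] and gh = Qb_abs_diff_integrable[OF g h]
  have "L1dist f h \<le> (LINT p:{0..1}|lborel. \<bar>f p - g p\<bar> + \<bar>g p - h p\<bar>)"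
    by (rule L1dist_le[OF f h set_integral_add(1)[OF fg gh]]) arith
  also have "\<dots> = L1dist f g + L1dist g h"
    unfolding L1dist_lebesgue[OF f g] L1dist_lebesgue[OF g h] by (rule set_integral_add(2)[OF fg gh])
  finally show ?thesis .
qed

(* Left continuity turns a pointwise difference into a difference on a whole interval. *)
lemma L1dist_zero:
  assumes f: "f \<in> Qb" and g: "g \<in> Qb" and z: "L1dist f g = 0"
  shows "f = g"
proof (rule ccontr)
  assume "f \<noteq> g"
  then obtain p where fp: "f p \<noteq> g p" by auto
  have p: "p \<in> {0<..1}" using fp QbD(4)[OF f] QbD(4)[OF g] by metis
  define e where "e = \<bar>f p - g p\<bar>"
  have e: "e > 0" using fp unfolding e_def by simp
  have lim: "((\<lambda>x. \<bar>f x - g x\<bar>) \<longlongrightarrow> e) (at_left p)"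
    unfolding e_def using QbD(3)[OF f p] QbD(3)[OF g p] by (intro tendsto_intros)
  have "eventually (\<lambda>x. \<bar>f x - g x\<bar> > e/2) (at_left p)"
    using order_tendstoD(1)[OF lim, of "e/2"] e by simp
  then obtain b where b: "b < p" "\<And>x. b < x \<Longrightarrow> x < p \<Longrightarrow> \<bar>f x - g x\<bar> > e/2"
    unfolding eventually_at_left_field by blast
  define c where "c = max b 0"
  have c: "0 \<le> c" "c < p" using b p unfolding c_def by auto
  have hi: "set_integrable lborel {0..1} (\<lambda>x. e/2 * indicator {c<..<p} x)"
    unfolding set_integrable_def
    by (rule integrableI_bounded_set_indicator[where B="e/2"]) (use e in \<open>auto simp: indicator_def\<close>)
  have "(LINT x:{0..1}|lborel. e/2 * indicator {c<..<p} x) \<le> L1dist f g"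
    unfolding L1dist_lebesgue[OF f g]
    by (rule set_integral_mono[OF hi Qb_abs_diff_integrable[OF f g]])
      (use b(2) e in \<open>force simp: c_def indicator_def\<close>)
  also have "(LINT x:{0..1}|lborel. e/2 * indicator {c<..<p} x) = (LINT x|lborel. e/2 * indicator {c<..<p} x)"
    unfolding set_lebesgue_integral_def
    by (rule Bochner_Integration.integral_cong) (use c p in \<open>auto simp: indicator_def\<close>)
  finally have "e/2 * (p - c) \<le> 0" using z c by simp
  moreover have "e/2 * (p - c) > 0" using e c by simp
  ultimately show False by simp
qed

lemma L1_metric: "Metric_space Qb L1dist"
  by (rule Metric_space.intro)
    (auto simp: L1dist_nonneg L1dist_commute intro: L1dist_zero L1dist_triangle,
      simp add: L1dist_def)

interpretation L1: Metric_space Qb L1dist by (rule L1_metric)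

lemma topspace_L1top: "topspace L1top = Qb"
  unfolding L1top_def by simp

lemma closedin_L1top_eventually:
  assumes S: "closedin L1top S" and x: "x \<in> Qb" "x \<notin> S" and xs: "\<And>n. xs n \<in> Qb"
    and lim: "(\<lambda>n. L1dist x (xs n)) \<longlonglongrightarrow> 0"
  shows "eventually (\<lambda>n. xs n \<notin> S) sequentially"
proof -
  have "openin (L1.mtopology) (Qb - S)"
    using S unfolding closedin_def topspace_L1top L1top_def by simp
  then obtain r where r: "r > 0" "L1.mball x r \<subseteq> Qb - S"
    using x unfolding L1.openin_mtopology by blast
  show ?thesis
    using order_tendstoD(2)[OF lim r(1)] by eventually_elim (metis r(2) x(1) xs L1.in_mball DiffD2 subsetD)
qed

lemma L1dist_tendsto_0:
  assumes "u \<longlonglongrightarrow> 0" "\<And>n. L1dist x (xs n) \<le> u n"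
  shows "(\<lambda>n. L1dist x (xs n)) \<longlonglongrightarrow> 0"
  by (rule tendsto_sandwich[of "\<lambda>_. 0" _ sequentially u]) (use assms L1dist_nonneg in auto)

lemma L1dist_const_fn: "L1dist (const_fn s) (const_fn t) \<le> \<bar>s - t\<bar>"
  by (rule L1dist_le_const[OF const_fn_Qb const_fn_Qb]) (auto simp: const_fn_def)

lemma L1dist_step_fn: "L1dist (step_fn a) (step_fn b) \<le> \<bar>a - b\<bar>"
proof -
  have le: "L1dist (step_fn a) (step_fn b) \<le> b - a" if ab: "a \<le> b" for a b
  proof -
    have h: "set_integrable lborel {0..1} (indicator {a..b} :: real \<Rightarrow> real)"
      unfolding set_integrable_def
      by (rule integrableI_bounded_set_indicator[where B=1]) (auto simp: emeasure_lborel_Icc)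
    have "L1dist (step_fn a) (step_fn b) \<le> (LINT p:{0..1}|lborel. indicator {a..b} p)"
      by (rule L1dist_le[OF step_fn_Qb step_fn_Qb h]) (use ab in \<open>auto simp: step_fn_def indicator_def\<close>)
    also have "\<dots> \<le> (LINT p|lborel. indicator {a..b} p)"
      unfolding set_lebesgue_integral_def
      by (rule integral_mono[OF h[unfolded set_integrable_def] integrable_real_indicator])
        (use ab in \<open>auto simp: indicator_def emeasure_lborel_Icc\<close>)
    also have "\<dots> = b - a" using ab by (simp add: measure_lborel_Icc)
    finally show ?thesis .
  qed
  show ?thesis
  proof (cases "a \<le> b")
    case True then show ?thesis using le[of a b] by simp
  next
    case False then show ?thesis using le[of b a] L1dist_commute[of "step_fn a"] by simp
  qed
qed

lemma L1dist_mix_const_fn: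
  assumes "0 \<le> \<alpha>" "\<alpha> \<le> 1" "U \<in> Qb"
  shows "L1dist (mix \<alpha> (const_fn c) U) (mix \<alpha> (const_fn d) U) \<le> \<bar>c - d\<bar>"
proof (rule L1dist_le_const[OF mix_Qb[OF const_fn_Qb assms(3) assms(1,2)]
                              mix_Qb[OF const_fn_Qb assms(3) assms(1,2)]])
  fix p :: real
  have "\<bar>mix \<alpha> (const_fn c) U p - mix \<alpha> (const_fn d) U p\<bar> = \<alpha> * \<bar>const_fn c p - const_fn d p\<bar>"
    using assms by (simp add: mix_def abs_mult flip: right_diff_distrib)
  also have "\<dots> \<le> 1 * \<bar>const_fn c p - const_fn d p\<bar>" using assms by (intro mult_right_mono) auto
  also have "\<dots> \<le> \<bar>c - d\<bar>" by (simp add: const_fn_def)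
  finally show "\<bar>mix \<alpha> (const_fn c) U p - mix \<alpha> (const_fn d) U p\<bar> \<le> \<bar>c - d\<bar>" .
qed

lemma L1dist_tendsto_0_abs:
  assumes "\<And>n. L1dist x (xs n) \<le> \<bar>s - t n\<bar>" and "t \<longlonglongrightarrow> s"
  shows "(\<lambda>n. L1dist x (xs n)) \<longlonglongrightarrow> 0"
proof (rule L1dist_tendsto_0[OF _ assms(1)])
  have "(\<lambda>n. \<bar>s - t n\<bar>) \<longlonglongrightarrow> \<bar>s - s\<bar>" by (intro tendsto_intros assms(2))
  then show "(\<lambda>n. \<bar>s - t n\<bar>) \<longlonglongrightarrow> 0" by simp
qed


(* A "step combination" is a constant plus a nonnegative combination of
   upper steps; the certainty equivalent and the Stieltjes integral will be computed explicitly on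
   such functions, and every member of Q_b is an L1 limit of step combinations. *)

definition step_combination ::
  "real \<Rightarrow> (nat \<Rightarrow> real) \<Rightarrow> (nat \<Rightarrow> real) \<Rightarrow> nat set \<Rightarrow> real \<Rightarrow> real" where
  "step_combination c a lam K = (\<lambda>p. const_fn c p + (\<Sum>k\<in>K. lam k * step_fn (a k) p))"

lemma step_combination_Qb:
  assumes "finite K" "\<And>k. k \<in> K \<Longrightarrow> lam k \<ge> 0"
  shows "step_combination c a lam K \<in> Qb"
  unfolding step_combination_def using assms by (intro add_Qb const_fn_Qb sum_Qb scale_Qb step_fn_Qb) auto

(* On the grid k/(n+1) the staircase of f takes the value of f at the grid point just below p;
   its lowest level is the lower bound -B. *)
definition staircase_level :: "(real \<Rightarrow> real) \<Rightarrow> real \<Rightarrow> nat \<Rightarrow> nat \<Rightarrow> real" where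
  "staircase_level f B n k = (if k = 0 then -B else f (real k / real (Suc n)))"

definition staircase :: "(real \<Rightarrow> real) \<Rightarrow> real \<Rightarrow> nat \<Rightarrow> real \<Rightarrow> real" where
  "staircase f B n = step_combination (-B) (\<lambda>k. real k / real (Suc n))
     (\<lambda>k. staircase_level f B n k - staircase_level f B n (k - 1)) {1..n}"

lemma staircase_increments_nonneg:
  assumes f: "f \<in> Qb" and B: "\<And>p. \<bar>f p\<bar> \<le> B" and k: "k \<in> {1..n}"
  shows "staircase_level f B n k - staircase_level f B n (k - 1) \<ge> 0"
proof (cases "k = 1")
  case True
  then show ?thesis unfolding staircase_level_def using B[of "1 / real (Suc n)"] by auto
next
  case False
  then have k2: "k \<ge> 2" "k < Suc n" using k by auto
  have "f (real (k - 1) / real (Suc n)) \<le> f (real k / real (Suc n))"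
    by (rule QbD(2)[OF f]) (use k2 in \<open>auto simp: divide_le_eq_1 frac_le\<close>)
  then show ?thesis using k2 unfolding staircase_level_def by auto
qed

lemma staircase_Qb:
  assumes "f \<in> Qb" "\<And>p. \<bar>f p\<bar> \<le> B"
  shows "staircase f B n \<in> Qb"
  unfolding staircase_def by (rule step_combination_Qb) (use staircase_increments_nonneg assms in auto)

(* The steps with k/(n+1) < p telescope to the level of the grid cell containing p. *)
lemma staircase_value:
  assumes p: "p \<in> {0<..1}"
  shows "staircase f B n p = staircase_level f B n (nat \<lceil>real (Suc n) * p\<rceil> - 1)"
proof -
  define N where "N = Suc n"
  define c where "c = \<lceil>real N * p\<rceil>"
  define j where "j = nat c - 1"
  have Np: "0 < real N * p" "real N * p \<le> real N"
    using p unfolding N_def by (auto simp: mult_le_cancel_left1)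
  have c1: "1 \<le> c" unfolding c_def using Np by (simp add: le_ceiling_iff)
  have cN: "c \<le> int N" unfolding c_def using Np by (simp add: ceiling_le_iff)
  have jn: "j \<le> n" using c1 cN unfolding j_def N_def by linarith
  have below_iff: "real k / real N < p \<longleftrightarrow> k \<le> j" for k
  proof -
    have "real k / real N < p \<longleftrightarrow> real k < real N * p"
      unfolding N_def by (simp add: divide_less_eq mult.commute)
    also have "\<dots> \<longleftrightarrow> int k < c" unfolding c_def by (simp add: less_ceiling_iff)
    also have "\<dots> \<longleftrightarrow> k \<le> j" unfolding j_def using c1 by linarith
    finally show ?thesis .
  qed
  let ?d = "\<lambda>k. staircase_level f B n k - staircase_level f B n (k - 1)"
  have "(\<Sum>k\<in>{1..n}. ?d k * step_fn (real k / real N) p) = (\<Sum>k\<in>{1..n}. if k \<in> {..j} then ?d k else 0)"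
    by (rule sum.cong) (use p below_iff in \<open>auto simp: step_fn_def\<close>)
  also have "\<dots> = (\<Sum>k\<in>{1..n} \<inter> {..j}. ?d k)"
    by (rule sum.inter_restrict[symmetric]) simp
  also have "{1..n} \<inter> {..j} = {Suc 0..j}" using jn by auto
  also have "(\<Sum>k\<in>{Suc 0..j}. ?d k) = staircase_level f B n j - staircase_level f B n 0"
    by (rule sum_telescope'') simp
  finally show ?thesis using p unfolding staircase_def step_combination_def N_def[symmetric] j_def c_def
    by (simp add: const_fn_def staircase_level_def)
qed

lemma staircase_bound:
  assumes "\<And>p. \<bar>f p\<bar> \<le> B" "B \<ge> 0"
  shows "\<bar>staircase f B n p\<bar> \<le> B"
proof (cases "p \<in> {0<..1}")
  case True
  then show ?thesis unfolding staircase_value[OF True] staircase_level_def using assms by auto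
next
  case False
  then show ?thesis using assms(2)
    by (auto simp: staircase_def step_combination_def const_fn_def step_fn_def)
qed

definition grid_below :: "real \<Rightarrow> nat \<Rightarrow> real" where
  "grid_below p n = (of_int \<lceil>real (Suc n) * p\<rceil> - 1) / real (Suc n)"

lemma grid_below_at_left: "filterlim (grid_below p) (at_left p) sequentially"
proof -
  have below: "grid_below p n < p" for n
  proof -
    have "of_int \<lceil>real (Suc n) * p\<rceil> - 1 < real (Suc n) * p" using ceiling_correct by blast
    then show ?thesis unfolding grid_below_def by (simp add: divide_less_eq mult.commute)
  qed
  have close: "p + - inverse (real (Suc n)) \<le> grid_below p n" for n
  proof -
    have "real (Suc n) * p - 1 \<le> of_int \<lceil>real (Suc n) * p\<rceil> - 1" by simp
    then have "(real (Suc n) * p - 1) / real (Suc n) \<le> grid_below p n"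
      unfolding grid_below_def by (simp add: divide_right_mono)
    then show ?thesis by (simp add: field_simps)
  qed
  have "grid_below p \<longlonglongrightarrow> p"
    by (rule tendsto_sandwich[OF always_eventually always_eventually
          LIMSEQ_inverse_real_of_nat_add_minus tendsto_const])
      (use below close less_imp_le in auto)
  then show ?thesis by (rule tendsto_imp_filterlim_at_left) (use below in simp)
qed

lemma staircase_eq_grid_below:
  assumes p: "p \<in> {0<..1}" and fine: "1 < real (Suc n) * p"
  shows "staircase f B n p = f (grid_below p n)"
proof -
  let ?c = "\<lceil>real (Suc n) * p\<rceil>"
  have c2: "2 \<le> ?c" using fine by (simp add: le_ceiling_iff)
  then have "1 \<le> nat ?c" by (simp add: le_nat_iff)
  then have "real (nat ?c - 1) = real (nat ?c) - 1" using of_nat_diff by simp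
  also have "real (nat ?c) = of_int ?c" using c2 by simp
  finally show ?thesis
    unfolding staircase_value[OF p] staircase_level_def grid_below_def using c2 by auto
qed

(* By left continuity the staircases converge pointwise on [0,1]. *)
lemma staircase_tendsto:
  assumes f: "f \<in> Qb" and x: "x \<in> {0..1}"
  shows "(\<lambda>n. staircase f B n x) \<longlonglongrightarrow> f x"
proof (cases "x = 0")
  case True
  then show ?thesis by (simp add: QbD(4)[OF f] staircase_def step_combination_def const_fn_def step_fn_def)
next
  case False
  then have p: "x \<in> {0<..1}" using x by auto
  obtain M :: nat where M: "1 / x < real M" using reals_Archimedean2 by blast
  have "eventually (\<lambda>n. f (grid_below x n) = staircase f B n x) sequentially"
  proof (rule eventually_sequentiallyI[of M])
    fix n assume "M \<le> n"
    then have "1 / x < real (Suc n)" using M by linarith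
    then have "1 < real (Suc n) * x" using p by (simp add: divide_less_eq mult.commute)
    then show "f (grid_below x n) = staircase f B n x" by (simp add: staircase_eq_grid_below[OF p])
  qed
  with filterlim_compose[OF QbD(3)[OF f p] grid_below_at_left]
  show ?thesis by (rule Lim_transform_eventually)
qed

lemma set_integral_01_bounded_convergence:
  fixes M :: "real measure" and s :: "nat \<Rightarrow> real \<Rightarrow> real" and f :: "real \<Rightarrow> real"
  assumes sM: "sets M = sets borel" and fin: "emeasure M {0..1} < \<infinity>"
    and sm: "\<And>n. s n \<in> borel_measurable borel" and fm: "f \<in> borel_measurable borel"
    and bd: "\<And>n x. \<bar>s n x\<bar> \<le> B"
    and lim: "\<And>x. x \<in> {0..1} \<Longrightarrow> (\<lambda>n. s n x) \<longlonglongrightarrow> f x"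
  shows "(\<lambda>n. LINT x:{0..1}|M. s n x) \<longlonglongrightarrow> (LINT x:{0..1}|M. f x)"
  unfolding set_lebesgue_integral_def
proof (rule integral_dominated_convergence[where w="\<lambda>x. B * indicator {0..1} x"])
  have eq: "borel_measurable M = borel_measurable borel"
    by (rule measurable_cong_sets[OF sM refl])
  show "(\<lambda>x. indicator {0..1} x *\<^sub>R f x) \<in> borel_measurable M"
    unfolding eq using fm by measurable
  show "\<And>n. (\<lambda>x. indicator {0..1} x *\<^sub>R s n x) \<in> borel_measurable M"
    unfolding eq using sm by measurable
  show "integrable M (\<lambda>x. B * indicator {0..1} x)"
    using sM fin by (intro integrable_mult_right integrable_real_indicator) auto
  show "AE x in M. (\<lambda>n. indicator {0..1} x *\<^sub>R s n x) \<longlonglongrightarrow> indicator {0..1} x *\<^sub>R f x"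
    by (rule AE_I2) (auto simp: indicator_def lim)
  show "\<And>n. AE x in M. norm (indicator {0..1} x *\<^sub>R s n x) \<le> B * indicator {0..1} x"
    by (rule AE_I2) (auto simp: indicator_def bd)
qed

lemma staircase_L1_tendsto:
  assumes f: "f \<in> Qb" and B: "\<And>p. \<bar>f p\<bar> \<le> B" "B \<ge> 0"
  shows "(\<lambda>n. L1dist f (staircase f B n)) \<longlonglongrightarrow> 0"
proof -
  note S = staircase_Qb[OF f B(1)]
  have "(\<lambda>n. LINT x:{0..1}|lborel. \<bar>f x - staircase f B n x\<bar>) \<longlonglongrightarrow> (LINT x:{0..1::real}|lborel. 0)"
  proof (rule set_integral_01_bounded_convergence[of lborel "\<lambda>n x. \<bar>f x - staircase f B n x\<bar>" "\<lambda>x. 0" "2 * B"])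
    show "\<And>n. (\<lambda>x. \<bar>f x - staircase f B n x\<bar>) \<in> borel_measurable borel"
      using Qb_borel_measurable[OF f] Qb_borel_measurable[OF S] by measurable
    show "\<bar>\<bar>f x - staircase f B n x\<bar>\<bar> \<le> 2 * B" for n x
      using B(1)[of x] staircase_bound[of f B n x, OF B] by linarith
    show "(\<lambda>n. \<bar>f x - staircase f B n x\<bar>) \<longlonglongrightarrow> 0" if "x \<in> {0..1}" for x
      using tendsto_diff[OF tendsto_const staircase_tendsto[OF f that], of "f x"]
      by (simp add: tendsto_rabs_zero_iff)
  qed auto
  then show ?thesis by (simp add: L1dist_lebesgue[OF f S])
qed


locale preference =
  fixes R :: "(real \<Rightarrow> real) \<Rightarrow> (real \<Rightarrow> real) \<Rightarrow> bool"
  assumes total_preorder: "total_preorder_on Qb R"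
    and monotonic: "monotonic_pref R"
    and continuous: "continuous_preorder L1top R"
    and dual_indep: "dual_independence R"
begin

abbreviation S :: "(real \<Rightarrow> real) \<Rightarrow> (real \<Rightarrow> real) \<Rightarrow> bool" where
  "S \<equiv> strict_part R"

lemma refl: "f \<in> Qb \<Longrightarrow> R f f"
  using total_preorder unfolding total_preorder_on_def by blast

lemma trans: "f \<in> Qb \<Longrightarrow> g \<in> Qb \<Longrightarrow> h \<in> Qb \<Longrightarrow> R f g \<Longrightarrow> R g h \<Longrightarrow> R f h"
  using total_preorder unfolding total_preorder_on_def by blast

lemma total: "f \<in> Qb \<Longrightarrow> g \<in> Qb \<Longrightarrow> \<not> R f g \<Longrightarrow> R g f"
  using total_preorder unfolding total_preorder_on_def by blast

lemma pref_mono: "f \<in> Qb \<Longrightarrow> g \<in> Qb \<Longrightarrow> (\<And>p. p \<in> {0<..1} \<Longrightarrow> g p \<le> f p) \<Longrightarrow> R f g"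
  using monotonic unfolding monotonic_pref_def by blast

lemma strict_weak_trans: "f \<in> Qb \<Longrightarrow> g \<in> Qb \<Longrightarrow> h \<in> Qb \<Longrightarrow> S f g \<Longrightarrow> R g h \<Longrightarrow> S f h"
  unfolding strict_part_def by (meson trans)

lemma weak_strict_trans: "f \<in> Qb \<Longrightarrow> g \<in> Qb \<Longrightarrow> h \<in> Qb \<Longrightarrow> R f g \<Longrightarrow> S g h \<Longrightarrow> S f h"
  unfolding strict_part_def by (meson trans)

lemma strict_mix:
  "f \<in> Qb \<Longrightarrow> g \<in> Qb \<Longrightarrow> h \<in> Qb \<Longrightarrow> 0 < \<alpha> \<Longrightarrow> \<alpha> < 1 \<Longrightarrow> S f g \<Longrightarrow> S (mix \<alpha> f h) (mix \<alpha> g h)"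
  using dual_indep unfolding dual_independence_def mix_def by blast

lemma const_fn_pref_mono: "c \<le> d \<Longrightarrow> R (const_fn d) (const_fn c)"
  by (rule pref_mono[OF const_fn_Qb const_fn_Qb]) (auto simp: const_fn_def)

lemma eventually_not_above:
  assumes P: "P \<in> Qb" and x: "x \<in> Qb" "\<not> R x P" and xs: "\<And>n. xs n \<in> Qb"
    and lim: "(\<lambda>n. L1dist x (xs n)) \<longlonglongrightarrow> 0"
  shows "eventually (\<lambda>n. \<not> R (xs n) P) sequentially"
proof -
  have "closedin L1top {\<Psi>\<in>Qb. R \<Psi> P}"
    using continuous P unfolding continuous_preorder_def topspace_L1top by blast
  from closedin_L1top_eventually[OF this x(1) _ xs lim] show ?thesis
    using x(2) by (auto elim: eventually_mono simp: xs)
qed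

lemma eventually_not_below:
  assumes P: "P \<in> Qb" and x: "x \<in> Qb" "\<not> R P x" and xs: "\<And>n. xs n \<in> Qb"
    and lim: "(\<lambda>n. L1dist x (xs n)) \<longlonglongrightarrow> 0"
  shows "eventually (\<lambda>n. \<not> R P (xs n)) sequentially"
proof -
  have "closedin L1top {\<Psi>\<in>Qb. R P \<Psi>}"
    using continuous P unfolding continuous_preorder_def topspace_L1top by blast
  from closedin_L1top_eventually[OF this x(1) _ xs lim] show ?thesis
    using x(2) by (auto elim: eventually_mono simp: xs)
qed

lemma above_limit:
  assumes "P \<in> Qb" "x \<in> Qb" "\<And>n. xs n \<in> Qb"
    and "(\<lambda>n. L1dist x (xs n)) \<longlonglongrightarrow> 0" and "\<And>n. R (xs n) P"
  shows "R x P"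
  using eventually_not_above[of P x xs] assms eventually_sequentially by (metis order_refl)

lemma below_limit:
  assumes "P \<in> Qb" "x \<in> Qb" "\<And>n. xs n \<in> Qb"
    and "(\<lambda>n. L1dist x (xs n)) \<longlonglongrightarrow> 0" and "\<And>n. R P (xs n)"
  shows "R P x"
  using eventually_not_below[of P x xs] assms eventually_sequentially by (metis order_refl)

lemma closed_constant_contours:
  assumes f: "f \<in> Qb"
  shows "closed {t. R f (const_fn t)}" "closed {t. R (const_fn t) f}"
proof -
  have lim: "(\<lambda>n. L1dist (const_fn l) (const_fn (t n))) \<longlonglongrightarrow> 0" if "t \<longlonglongrightarrow> l" for t l
    by (rule L1dist_tendsto_0_abs[OF L1dist_const_fn that])
  show "closed {t. R f (const_fn t)}"
    unfolding closed_sequential_limits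
    using below_limit[OF f const_fn_Qb const_fn_Qb lim] by blast
  show "closed {t. R (const_fn t) f}"
    unfolding closed_sequential_limits
    using above_limit[OF f const_fn_Qb const_fn_Qb lim] by blast
qed

(* Every f has a certainty equivalent: by completeness the two closed contour sets cover the
   connected real line, and both are nonempty by monotonicity, so they intersect. *)
lemma certainty_equivalent_exists:
  assumes f: "f \<in> Qb"
  shows "\<exists>c. R f (const_fn c) \<and> R (const_fn c) f"
proof -
  obtain B where B: "\<And>p. \<bar>f p\<bar> \<le> B" using QbD(1)[OF f] by blast
  have B': "-B \<le> f p \<and> f p \<le> B" for p using B[of p] by (simp add: abs_le_iff)
  have "R f (const_fn (-B))" "R (const_fn B) f"
    by (rule pref_mono[OF f const_fn_Qb] pref_mono[OF const_fn_Qb f];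
        use B' in \<open>simp add: const_fn_def\<close>)+
  moreover have "UNIV \<subseteq> {t. R f (const_fn t)} \<union> {t. R (const_fn t) f}"
    using total[OF f const_fn_Qb] by blast
  ultimately have "{t. R f (const_fn t)} \<inter> {t. R (const_fn t) f} \<noteq> {}"
    using connected_UNIV[where 'a=real] closed_constant_contours[OF f]
    unfolding connected_closed by blast
  then show ?thesis by blast
qed

definition nondegenerate :: bool where
  "nondegenerate \<longleftrightarrow> (\<exists>c d. S (const_fn c) (const_fn d))"

(* Dual independence spreads one strict comparison of constants to all of them: mixing c0 > d0
   with a suitable constant e yields a strict comparison of arbitrarily close constants. *)
lemma strict_const_fn_mono:
  assumes nd: nondegenerate and ab: "a < b"
  shows "S (const_fn b) (const_fn a)"
proof -
  obtain c0 d0 where s0: "S (const_fn c0) (const_fn d0)" using nd unfolding nondegenerate_def by blast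
  have L: "c0 - d0 > 0"
    using s0 const_fn_pref_mono[of c0 d0] unfolding strict_part_def by force
  define \<alpha> where "\<alpha> = min (1/2) ((b - a) / (2 * (c0 - d0)))"
  have \<alpha>: "0 < \<alpha>" "\<alpha> < 1" using L ab unfolding \<alpha>_def by auto
  have "\<alpha> * (c0 - d0) \<le> (b - a) / (2 * (c0 - d0)) * (c0 - d0)"
    unfolding \<alpha>_def using L by (intro mult_right_mono) auto
  also have "\<dots> = (b - a) / 2" using L by (simp add: field_simps)
  finally have \<alpha>L: "\<alpha> * (c0 - d0) \<le> (b - a) / 2" .
  define e where "e = (a - \<alpha> * d0) / (1 - \<alpha>)"
  have e1: "\<alpha> * d0 + (1 - \<alpha>) * e = a" using \<alpha> unfolding e_def by (simp add: field_simps)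
  then have e2: "\<alpha> * c0 + (1 - \<alpha>) * e = a + \<alpha> * (c0 - d0)" by (simp add: algebra_simps)
  have "S (mix \<alpha> (const_fn c0) (const_fn e)) (mix \<alpha> (const_fn d0) (const_fn e))"
    by (rule strict_mix[OF const_fn_Qb const_fn_Qb const_fn_Qb \<alpha> s0])
  then have "S (const_fn (a + \<alpha> * (c0 - d0))) (const_fn a)" unfolding mix_const_fn e1 e2 .
  moreover have "R (const_fn b) (const_fn (a + \<alpha> * (c0 - d0)))"
    using \<alpha>L ab by (intro const_fn_pref_mono) simp
  ultimately show ?thesis using weak_strict_trans[OF const_fn_Qb const_fn_Qb const_fn_Qb] by blast
qed

end

locale nondegenerate_preference = preference +
  assumes nondeg: nondegenerate
begin

definition ce :: "(real \<Rightarrow> real) \<Rightarrow> real" where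
  "ce f = (SOME c. R f (const_fn c) \<and> R (const_fn c) f)"

lemma ce_indifferent: "f \<in> Qb \<Longrightarrow> R f (const_fn (ce f)) \<and> R (const_fn (ce f)) f"
  unfolding ce_def by (rule someI_ex) (rule certainty_equivalent_exists)

lemma ce_unique:
  assumes f: "f \<in> Qb" and c: "R f (const_fn c)" "R (const_fn c) f"
  shows "ce f = c"
proof (rule ccontr)
  assume "ce f \<noteq> c"
  then consider "c < ce f" | "ce f < c" by linarith
  then show False
  proof cases
    case 1
    have "R (const_fn c) (const_fn (ce f))" using trans[OF const_fn_Qb f const_fn_Qb c(2)] ce_indifferent[OF f] by blast
    then show False using strict_const_fn_mono[OF nondeg 1] unfolding strict_part_def by blast
  next
    case 2
    have "R (const_fn (ce f)) (const_fn c)" using trans[OF const_fn_Qb f const_fn_Qb _ c(1)] ce_indifferent[OF f] by blast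
    then show False using strict_const_fn_mono[OF nondeg 2] unfolding strict_part_def by blast
  qed
qed

lemma ce_const_fn: "ce (const_fn c) = c"
  by (rule ce_unique[OF const_fn_Qb refl[OF const_fn_Qb] refl[OF const_fn_Qb]])

lemma ce_represents:
  assumes f: "f \<in> Qb" and g: "g \<in> Qb"
  shows "S f g \<longleftrightarrow> ce g < ce f"
proof
  assume s: "S f g"
  show "ce g < ce f"
  proof (rule ccontr)
    assume "\<not> ce g < ce f"
    then have "R (const_fn (ce g)) (const_fn (ce f))" by (intro const_fn_pref_mono) simp
    then have "R g f"
      using ce_indifferent[OF f] ce_indifferent[OF g] trans[OF g const_fn_Qb f] trans[OF g const_fn_Qb const_fn_Qb]
      by blast
    then show False using s unfolding strict_part_def by blast
  qed
next
  assume "ce g < ce f"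
  then have "S (const_fn (ce f)) (const_fn (ce g))" by (rule strict_const_fn_mono[OF nondeg])
  then have "S f (const_fn (ce g))"
    using weak_strict_trans[OF f const_fn_Qb const_fn_Qb] ce_indifferent[OF f] by blast
  then show "S f g" using strict_weak_trans[OF f const_fn_Qb g] ce_indifferent[OF g] by blast
qed

lemma ce_mono:
  assumes "f \<in> Qb" "g \<in> Qb" "\<And>p. p \<in> {0<..1} \<Longrightarrow> g p \<le> f p"
  shows "ce g \<le> ce f"
  using ce_represents[of g f] pref_mono[of f g] assms unfolding strict_part_def by auto

lemma ce_L1_continuous:
  assumes f: "f \<in> Qb" and xs: "\<And>n. xs n \<in> Qb" and lim: "(\<lambda>n. L1dist f (xs n)) \<longlonglongrightarrow> 0"
  shows "(\<lambda>n. ce (xs n)) \<longlonglongrightarrow> ce f"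
proof (rule order_tendstoI)
  fix a assume "a < ce f"
  then have "\<not> R (const_fn a) f"
    using ce_represents[OF f const_fn_Qb, of a] by (simp add: ce_const_fn strict_part_def)
  from eventually_not_below[OF const_fn_Qb f this xs lim]
  show "eventually (\<lambda>n. a < ce (xs n)) sequentially"
    by eventually_elim
      (use total[OF const_fn_Qb xs] ce_represents[OF xs const_fn_Qb] in \<open>auto simp: ce_const_fn strict_part_def\<close>)
next
  fix a assume "ce f < a"
  then have "\<not> R f (const_fn a)"
    using ce_represents[OF const_fn_Qb f, of a] by (simp add: ce_const_fn strict_part_def)
  from eventually_not_above[OF const_fn_Qb f this xs lim]
  show "eventually (\<lambda>n. ce (xs n) < a) sequentially"
    by eventually_elim
      (use total[OF xs const_fn_Qb] ce_represents[OF const_fn_Qb xs] in \<open>auto simp: ce_const_fn strict_part_def\<close>)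
qed

(* Dual independence plus continuity: inside a mixture, f may be replaced by anything indifferent
   to it (strict comparisons with nearby constants pass to the mixture and then to the limit). *)
lemma mix_indifferent:
  assumes P: "P \<in> Qb" and U: "U \<in> Qb" and \<alpha>: "0 < \<alpha>" "\<alpha> < 1"
    and c: "R P (const_fn c)" "R (const_fn c) P"
  shows "R (mix \<alpha> P U) (mix \<alpha> (const_fn c) U) \<and> R (mix \<alpha> (const_fn c) U) (mix \<alpha> P U)"
proof
  define e where "e n = inverse (real (Suc n))" for n
  have e0: "e n > 0" for n unfolding e_def by simp
  have mixQ: "mix \<alpha> (const_fn x) U \<in> Qb" for x using \<alpha> by (intro mix_Qb const_fn_Qb U) auto
  have mixP: "mix \<alpha> P U \<in> Qb" using \<alpha> by (intro mix_Qb P U) auto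
  have lim: "(\<lambda>n. L1dist (mix \<alpha> (const_fn c) U) (mix \<alpha> (const_fn (c + s * e n)) U)) \<longlonglongrightarrow> 0"
    if s: "\<bar>s\<bar> = 1" for s
  proof (rule L1dist_tendsto_0[OF LIMSEQ_inverse_real_of_nat[folded e_def]])
    show "L1dist (mix \<alpha> (const_fn c) U) (mix \<alpha> (const_fn (c + s * e n)) U) \<le> e n" for n
      using L1dist_mix_const_fn[of \<alpha> U c "c + s * e n"] \<alpha> U s e0[of n] by (simp add: abs_mult)
  qed
  show "R (mix \<alpha> (const_fn c) U) (mix \<alpha> P U)"
  proof (rule above_limit[OF mixP mixQ mixQ lim[of 1]])
    fix n
    have "S (const_fn (c + 1 * e n)) (const_fn c)" using e0[of n] by (intro strict_const_fn_mono[OF nondeg]) simp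
    then have "S (const_fn (c + 1 * e n)) P" using strict_weak_trans[OF const_fn_Qb const_fn_Qb P] c by blast
    then show "R (mix \<alpha> (const_fn (c + 1 * e n)) U) (mix \<alpha> P U)"
      using strict_mix[OF const_fn_Qb P U \<alpha>] unfolding strict_part_def by blast
  qed simp
  show "R (mix \<alpha> P U) (mix \<alpha> (const_fn c) U)"
  proof (rule below_limit[OF mixP mixQ mixQ lim[of "-1"]])
    fix n
    have "S (const_fn c) (const_fn (c + -1 * e n))" using e0[of n] by (intro strict_const_fn_mono[OF nondeg]) simp
    then have "S P (const_fn (c + -1 * e n))" using weak_strict_trans[OF P const_fn_Qb const_fn_Qb] c by blast
    then show "R (mix \<alpha> P U) (mix \<alpha> (const_fn (c + -1 * e n)) U)"
      using strict_mix[OF P const_fn_Qb U \<alpha>] unfolding strict_part_def by blast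
  qed simp
qed

(* Hence the certainty equivalent is affine: replace f, then g, by their certainty equivalents. *)
lemma ce_mix:
  assumes f: "f \<in> Qb" and g: "g \<in> Qb" and \<alpha>: "0 \<le> \<alpha>" "\<alpha> \<le> 1"
  shows "ce (mix \<alpha> f g) = \<alpha> * ce f + (1 - \<alpha>) * ce g"
proof (cases "\<alpha> = 0 \<or> \<alpha> = 1")
  case True
  then show ?thesis by (auto simp: mix_def)
next
  case False
  then have \<alpha>': "0 < \<alpha>" "\<alpha> < 1" "0 < 1 - \<alpha>" "1 - \<alpha> < 1" using \<alpha> by auto
  define x y where "x = ce f" and "y = ce g"
  define c where "c = \<alpha> * x + (1 - \<alpha>) * y"
  have swap: "mix \<alpha> (const_fn x) g = mix (1 - \<alpha>) g (const_fn x)" by (auto simp: mix_def)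
  have collapse: "mix (1 - \<alpha>) (const_fn y) (const_fn x) = const_fn c"
    unfolding mix_const_fn c_def by (simp add: algebra_simps)
  have Q1: "mix \<alpha> f g \<in> Qb" by (rule mix_Qb[OF f g \<alpha>])
  have Q2: "mix \<alpha> (const_fn x) g \<in> Qb" by (rule mix_Qb[OF const_fn_Qb g \<alpha>])
  have fx: "R f (const_fn x)" "R (const_fn x) f" and gy: "R g (const_fn y)" "R (const_fn y) g"
    using ce_indifferent[OF f] ce_indifferent[OF g] unfolding x_def y_def by auto
  have r1: "R (mix \<alpha> f g) (mix \<alpha> (const_fn x) g)" "R (mix \<alpha> (const_fn x) g) (mix \<alpha> f g)"
    using mix_indifferent[OF f g \<alpha>'(1,2) fx] by auto
  have r2: "R (mix \<alpha> (const_fn x) g) (const_fn c)" "R (const_fn c) (mix \<alpha> (const_fn x) g)"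
    using mix_indifferent[OF g const_fn_Qb \<alpha>'(3,4) gy, of x] unfolding swap collapse by auto
  have "ce (mix \<alpha> f g) = c"
    by (rule ce_unique[OF Q1 trans[OF Q1 Q2 const_fn_Qb r1(1) r2(1)] trans[OF const_fn_Qb Q2 Q1 r2(2) r1(2)]])
  then show ?thesis unfolding c_def x_def y_def .
qed

lemma ce_scale:
  assumes f: "f \<in> Qb" and t: "t \<ge> 0"
  shows "ce (\<lambda>p. t * f p) = t * ce f"
proof (cases "t \<le> 1")
  case True
  have "(\<lambda>p. t * f p) = mix t f (const_fn 0)" by (auto simp: mix_def const_fn_def QbD(4)[OF f])
  then show ?thesis using ce_mix[OF f const_fn_Qb t True] by (simp add: ce_const_fn)
next
  case False
  have "mix (1/t) (\<lambda>p. t * f p) (const_fn 0) = f"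
    using False by (auto simp: mix_def const_fn_def QbD(4)[OF f])
  moreover have "ce (mix (1/t) (\<lambda>p. t * f p) (const_fn 0)) = 1/t * ce (\<lambda>p. t * f p) + (1 - 1/t) * ce (const_fn 0)"
    by (rule ce_mix[OF scale_Qb[OF f t] const_fn_Qb]) (use False in auto)
  ultimately have "ce f = 1/t * ce (\<lambda>p. t * f p)" by (simp add: ce_const_fn)
  then show ?thesis using False by (simp add: field_simps)
qed

lemma ce_add:
  assumes f: "f \<in> Qb" and g: "g \<in> Qb"
  shows "ce (\<lambda>p. f p + g p) = ce f + ce g"
proof -
  have "(\<lambda>p. f p + g p) = (\<lambda>p. 2 * mix (1/2) f g p)" by (auto simp: mix_def)
  then show ?thesis
    using ce_scale[OF mix_Qb[OF f g, of "1/2"], of 2] ce_mix[OF f g, of "1/2"] by simp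
qed

lemma ce_sum:
  "finite K \<Longrightarrow> (\<And>k. k \<in> K \<Longrightarrow> f k \<in> Qb) \<Longrightarrow> ce (\<lambda>p. \<Sum>k\<in>K. f k p) = (\<Sum>k\<in>K. ce (f k))"
  by (induction K rule: finite_induct) (simp_all add: zero_eq_const_fn ce_const_fn ce_add sum_Qb)

definition w :: "real \<Rightarrow> real" where
  "w a = 1 - ce (step_fn a)"

lemma w_mono: "a \<le> b \<Longrightarrow> w a \<le> w b"
  unfolding w_def by (simp, rule ce_mono[OF step_fn_Qb step_fn_Qb]) (auto simp: step_fn_def)

lemma w_eq_0: "a \<le> 0 \<Longrightarrow> w a = 0"
proof -
  assume "a \<le> 0"
  then have "step_fn a = const_fn 1" by (auto simp: step_fn_def const_fn_def)
  then show ?thesis unfolding w_def by (simp add: ce_const_fn)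
qed

lemma w_eq_1: "1 \<le> a \<Longrightarrow> w a = 1"
proof -
  assume "1 \<le> a"
  then have "step_fn a = const_fn 0" by (auto simp: step_fn_def const_fn_def)
  then show ?thesis unfolding w_def by (simp add: ce_const_fn)
qed

lemma w_continuous: "isCont w a"
  unfolding continuous_at_sequentially comp_def w_def
proof (intro allI impI tendsto_diff tendsto_const)
  fix x :: "nat \<Rightarrow> real" assume "x \<longlonglongrightarrow> a"
  then have "(\<lambda>n. L1dist (step_fn a) (step_fn (x n))) \<longlonglongrightarrow> 0"
    by (rule L1dist_tendsto_0_abs[OF L1dist_step_fn])
  then show "(\<lambda>n. ce (step_fn (x n))) \<longlonglongrightarrow> ce (step_fn a)"
    by (rule ce_L1_continuous[OF step_fn_Qb step_fn_Qb])
qed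

end

definition weight_representation ::
  "((real \<Rightarrow> real) \<Rightarrow> (real \<Rightarrow> real) \<Rightarrow> bool) \<Rightarrow> (real \<Rightarrow> real) \<Rightarrow> bool" where
  "weight_representation R w \<longleftrightarrow> bounded (w ` {0..1}) \<and> mono_on {0..1} w \<and> continuous_on {0..1} w \<and>
     numerical_representation Qb R (stieltjes01 w)"

context nondegenerate_preference
begin

abbreviation mu :: "real measure" where "mu \<equiv> interval_measure w"

definition stj :: "(real \<Rightarrow> real) \<Rightarrow> real" where
  "stj f = (LINT p:{0..1}|mu. f p)"

lemma measure_mu_Ioc: "a \<le> b \<Longrightarrow> measure mu {a<..b} = w b - w a"
  by (rule measure_interval_measure_Ioc)
    (auto intro: w_mono continuous_at_imp_continuous_at_within[OF w_continuous])

lemma emeasure_mu_01_finite: "emeasure mu {0..1} < \<infinity>"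
proof -
  have "emeasure mu {0..1} \<le> emeasure mu {-1<..1}" by (rule emeasure_mono) auto
  also have "\<dots> = ennreal (w 1 - w (-1))"
    by (rule emeasure_interval_measure_Ioc)
      (auto intro: w_mono continuous_at_imp_continuous_at_within[OF w_continuous])
  finally show ?thesis using order_le_less_trans by fastforce
qed

lemma stj_integrable:
  assumes f: "f \<in> Qb"
  shows "set_integrable mu {0..1} f"
proof -
  obtain B where B: "\<forall>p. \<bar>f p\<bar> \<le> B" using QbD(1)[OF f] by blast
  show ?thesis unfolding set_integrable_def
  proof (rule integrableI_bounded_set_indicator[where B=B])
    show "f \<in> borel_measurable mu"
      using Qb_borel_measurable[OF f] measurable_cong_sets[of mu borel] by simp
  qed (use emeasure_mu_01_finite B in auto)
qed

lemma stj_add: "f \<in> Qb \<Longrightarrow> g \<in> Qb \<Longrightarrow> stj (\<lambda>p. f p + g p) = stj f + stj g"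
  unfolding stj_def by (rule set_integral_add(2)[OF stj_integrable stj_integrable])

lemma stj_scale: "stj (\<lambda>p. t * f p) = t * stj f"
  unfolding stj_def by (rule set_integral_mult_right)

lemma stj_sum:
  "finite K \<Longrightarrow> (\<And>k. k \<in> K \<Longrightarrow> f k \<in> Qb) \<Longrightarrow> stj (\<lambda>p. \<Sum>k\<in>K. f k p) = (\<Sum>k\<in>K. stj (f k))"
  by (induction K rule: finite_induct) (simp add: stj_def, simp add: stj_add sum_Qb)

lemma stj_const_fn: "stj (const_fn c) = c"
proof -
  have "stj (const_fn c) = integral\<^sup>L mu (\<lambda>p. c * indicator {0<..1} p)"
    unfolding stj_def set_lebesgue_integral_def
    by (rule Bochner_Integration.integral_cong) (auto simp: const_fn_def indicator_def)
  also have "\<dots> = c" using measure_mu_Ioc[of 0 1] by (simp add: w_eq_0 w_eq_1)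
  finally show ?thesis .
qed

lemma stj_step_fn: "stj (step_fn a) = 1 - w a"
proof -
  have "stj (step_fn a) = measure mu {max 0 a<..1}"
    unfolding stj_def set_lebesgue_integral_def
    by (subst Bochner_Integration.integral_cong[of _ _ _ "indicator {max 0 a<..1}"])
      (auto simp: step_fn_def indicator_def)
  also have "\<dots> = 1 - w a"
    by (cases "a < 1"; cases "a \<le> 0") (auto simp: measure_mu_Ioc w_eq_0 w_eq_1 max_def)
  finally show ?thesis .
qed

(* By additivity and homogeneity, ce and stj agree on step combinations. *)
lemma ce_eq_stj_step_combination:
  assumes K: "finite K" and lam: "\<And>k. k \<in> K \<Longrightarrow> lam k \<ge> 0"
  shows "ce (step_combination c a lam K) = stj (step_combination c a lam K)"
proof -
  have steps: "(\<lambda>p. lam k * step_fn (a k) p) \<in> Qb" if "k \<in> K" for k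
    using lam[OF that] by (rule scale_Qb[OF step_fn_Qb])
  have sum: "(\<lambda>p. \<Sum>k\<in>K. lam k * step_fn (a k) p) \<in> Qb" by (rule sum_Qb[OF K steps])
  have "(\<Sum>k\<in>K. ce (\<lambda>p. lam k * step_fn (a k) p)) = (\<Sum>k\<in>K. lam k * (1 - w (a k)))"
    by (rule sum.cong) (simp_all add: ce_scale[OF step_fn_Qb lam] w_def)
  then have "ce (step_combination c a lam K) = c + (\<Sum>k\<in>K. lam k * (1 - w (a k)))"
    unfolding step_combination_def ce_add[OF const_fn_Qb sum] ce_const_fn
    using ce_sum[OF K steps] by simp
  also have "\<dots> = stj (step_combination c a lam K)"
    unfolding step_combination_def stj_add[OF const_fn_Qb sum] stj_const_fn
    using stj_sum[OF K steps] by (simp add: stj_scale stj_step_fn)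
  finally show ?thesis .
qed

(* Both sides are continuous along the staircase approximation: ce in L1, stj by bounded
   convergence.  Hence they agree everywhere. *)
lemma ce_eq_stj:
  assumes f: "f \<in> Qb"
  shows "ce f = stj f"
proof -
  obtain B where B: "\<And>p. \<bar>f p\<bar> \<le> B" "B \<ge> 0" using QbD(1)[OF f] by blast
  note staircases = staircase_Qb[OF f B(1)]
  have "ce (staircase f B n) = stj (staircase f B n)" for n
    unfolding staircase_def
    by (rule ce_eq_stj_step_combination) (use staircase_increments_nonneg[OF f B(1)] in auto)
  moreover have "(\<lambda>n. ce (staircase f B n)) \<longlonglongrightarrow> ce f"
    by (rule ce_L1_continuous[OF f staircases staircase_L1_tendsto[OF f B]])
  moreover have "(\<lambda>n. stj (staircase f B n)) \<longlonglongrightarrow> stj f"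
    unfolding stj_def
    by (rule set_integral_01_bounded_convergence[OF _ emeasure_mu_01_finite _ _ staircase_bound[OF B]])
      (auto intro: Qb_borel_measurable f staircases staircase_tendsto)
  ultimately show ?thesis using LIMSEQ_unique by simp
qed

lemma representation_nondegenerate: "weight_representation R w"
  unfolding weight_representation_def
proof (intro conjI)
  have "w ` {0..1} \<subseteq> {0..1}" using w_mono[of 0] w_mono[of _ 1] by (auto simp: w_eq_0 w_eq_1)
  then show "bounded (w ` {0..1})" by (rule bounded_subset[OF bounded_closed_interval])
  show "mono_on {0..1} w" by (auto simp: mono_on_def intro: w_mono)
  show "continuous_on {0..1} w" by (intro continuous_at_imp_continuous_on ballI w_continuous)
  have "(\<lambda>x. w (max 0 (min 1 x))) = w"
    by (rule ext) (auto simp: w_eq_0 w_eq_1 max_def min_def)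
  then have "stieltjes01 w = stj" by (auto simp: stieltjes01_def stj_def)
  then show "numerical_representation Qb R (stieltjes01 w)"
    unfolding numerical_representation_def by (simp add: ce_represents flip: ce_eq_stj)
qed

end

(* If no constant is strictly better than another, R is total indifference (every f lies between
   two constants), which the zero weight represents. *)
lemma (in preference) representation_degenerate:
  assumes "\<not> nondegenerate"
  shows "weight_representation R (\<lambda>_. 0)"
proof -
  have indifferent: "R f g" if f: "f \<in> Qb" and g: "g \<in> Qb" for f g
  proof -
    obtain B1 where B1: "\<And>p. \<bar>f p\<bar> \<le> B1" using QbD(1)[OF f] by blast
    obtain B2 where B2: "\<And>p. \<bar>g p\<bar> \<le> B2" using QbD(1)[OF g] by blast
    define B where "B = max B1 B2"
    have bounds: "-B \<le> f p" "g p \<le> B" for p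
      using B1[of p] B2[of p] unfolding B_def by (auto simp: abs_le_iff)
    have "R f (const_fn (-B))" "R (const_fn B) g"
      by (rule pref_mono[OF f const_fn_Qb] pref_mono[OF const_fn_Qb g]; simp add: bounds const_fn_def)+
    moreover have "R (const_fn (-B)) (const_fn B)"
      using assms total[OF const_fn_Qb const_fn_Qb] unfolding nondegenerate_def strict_part_def by blast
    ultimately show ?thesis using trans f g const_fn_Qb by meson
  qed
  have "stieltjes01 (\<lambda>_. 0) f = 0" for f
  proof -
    have "{-1<..1::real} \<in> null_sets (interval_measure (\<lambda>x. 0))"
      by (rule null_setsI) (simp_all add: emeasure_interval_measure_Ioc)
    then have "AE x in interval_measure (\<lambda>x. 0). indicator {0..1} x *\<^sub>R f x = 0"
      by (rule AE_I') (auto simp: indicator_def)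
    then show ?thesis unfolding stieltjes01_def set_lebesgue_integral_def
      by (simp add: integral_eq_zero_AE)
  qed
  moreover have "(\<lambda>_. 0 :: real) ` {0..1::real} = {0}" by (rule image_constant[of 0]) simp
  ultimately show ?thesis
    using indifferent
    by (auto simp: weight_representation_def numerical_representation_def strict_part_def mono_on_def)
qed

theorem mainTheorem11:
  fixes R :: "(real \<Rightarrow> real) \<Rightarrow> (real \<Rightarrow> real) \<Rightarrow> bool"
  assumes "total_preorder_on Qb R"
    and "monotonic_pref R"
    and "continuous_preorder L1top R"
    and "dual_independence R"
  shows "\<exists>w :: real \<Rightarrow> real. bounded (w ` {0..1}) \<and> mono_on {0..1} w \<and> continuous_on {0..1} w \<and>
           numerical_representation Qb R (stieltjes01 w)"
proof -
  interpret preference R using assms by (rule preference.intro)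
  have "\<exists>w. weight_representation R w"
  proof (cases nondegenerate)
    case True
    interpret nondegenerate_preference R by unfold_locales (rule True)
    show ?thesis using representation_nondegenerate by blast
  next
    case False
    show ?thesis using representation_degenerate[OF False] by blast
  qed
  then show ?thesis unfolding weight_representation_def .
qed

end
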